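(* For every one-red TAP instance, the set of exemplars output by GREEDY has margin at least $\tfrac12$ times the maximum margin of the instance; that is, GREEDY is a $\tfrac12$-approximation for one-red TAP. Consequently GREEDY is a $\tfrac12$-approximation for $2$-weight TAP (instances in which every exemplar contains at most two features and, by the standing preprocessing, at least one red and at least one blue feature).
   Context: Target Approximation Problem (TAP): the input is a groundset $U$ of features, a target $T\subseteq U$, and a collection $S$ of exemplars, each a subset of $U$. Features in $U\cap T$ are blue, features in $U\setminus T$ are red. A feature appears in $S'\subseteq S$ if it lies in $\bigcup_{E\in S'}E$. The margin of $S'$ is (number of blue features appearing in $S'$) minus (number of red features appearing in $S'$); TAP asks for $S'$ of maximum margin. It is assumed that every feature appears in at least one exemplar and that $T$ and all exemplars are nonempty. Standing preprocessing: exemplars with no red feature are always taken and removed together with their features, and exemplars with no blue feature are deleted, so every exemplar contains at least one red and at least one blue feature. An instance is one-red if every exemplar contains exactly one red feature. A red feature $r$ covers a blue feature $b$ if some exemplar contains both. GREEDY: until every blue feature is covered, repeatedly choose the red feature that covers the largest number of not-yet-covered blue features (ties broken arbitrarily); the output is the set of all exemplars containing a chosen red feature. *)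

theory Defs
  imports Complex_Main
begin

text \<open>A TAP instance: groundset U, target T, collection S of exemplars.  We consider instances after the
  standing preprocessing: every exemplar contains at least one red and at least
  one blue feature.\<close>

definition tap_instance :: "'a set \<Rightarrow> 'a set \<Rightarrow> 'a set set \<Rightarrow> bool" where
  "tap_instance U T S \<longleftrightarrow>
     finite U \<and> T \<subseteq> U \<and> T \<noteq> {} \<and>
     (\<forall>E\<in>S. E \<noteq> {} \<and> E \<subseteq> U) \<and>
     \<Union>S = U \<and>
     (\<forall>E\<in>S. E \<inter> T \<noteq> {} \<and> E - T \<noteq> {})"

definition blue :: "'a set \<Rightarrow> 'a set \<Rightarrow> 'a set" where
  "blue U T = U \<inter> T"

definition red :: "'a set \<Rightarrow> 'a set \<Rightarrow> 'a set" where
  "red U T = U - T"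

definition margin :: "'a set \<Rightarrow> 'a set \<Rightarrow> 'a set set \<Rightarrow> int" where
  "margin U T S' = int (card (blue U T \<inter> \<Union>S')) - int (card (red U T \<inter> \<Union>S'))"

definition max_margin :: "'a set \<Rightarrow> 'a set \<Rightarrow> 'a set set \<Rightarrow> int" where
  "max_margin U T S = Max (margin U T ` Pow S)"

definition one_red :: "'a set \<Rightarrow> 'a set \<Rightarrow> 'a set set \<Rightarrow> bool" where
  "one_red U T S \<longleftrightarrow> (\<forall>E\<in>S. card (red U T \<inter> E) = 1)"

definition two_weight :: "'a set set \<Rightarrow> bool" where
  "two_weight S \<longleftrightarrow> (\<forall>E\<in>S. card E \<le> 2)"

definition covers :: "'a set set \<Rightarrow> 'a \<Rightarrow> 'a \<Rightarrow> bool" where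
  "covers S r b \<longleftrightarrow> (\<exists>E\<in>S. r \<in> E \<and> b \<in> E)"

definition covered :: "'a set set \<Rightarrow> 'a list \<Rightarrow> 'a set" where
  "covered S rs = {b. \<exists>r\<in>set rs. covers S r b}"

definition gain :: "'a set \<Rightarrow> 'a set \<Rightarrow> 'a set set \<Rightarrow> 'a set \<Rightarrow> 'a \<Rightarrow> nat" where
  "gain U T S C r = card {b \<in> blue U T. b \<notin> C \<and> covers S r b}"

text \<open>A (complete) run of GREEDY, with arbitrary tie breaking: the list of chosen red
  features in order.\<close>
definition greedy_run :: "'a set \<Rightarrow> 'a set \<Rightarrow> 'a set set \<Rightarrow> 'a list \<Rightarrow> bool" where
  "greedy_run U T S rs \<longleftrightarrow>
     (\<forall>i < length rs.
        \<not> (blue U T \<subseteq> covered S (take i rs)) \<and>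
        rs ! i \<in> red U T \<and>
        (\<forall>r \<in> red U T. gain U T S (covered S (take i rs)) r
                          \<le> gain U T S (covered S (take i rs)) (rs ! i))) \<and>
     blue U T \<subseteq> covered S rs"

definition greedy_output :: "'a set set \<Rightarrow> 'a list \<Rightarrow> 'a set set" where
  "greedy_output S rs = {E \<in> S. \<exists>r \<in> set rs. r \<in> E}"

end

theory Submission
  imports Defs
begin

text \<open>Let g(0), ..., g(k-1) be the gains of the greedy choices. They add up to the number
  of blue features and each is at least 1; by one-redness the output contains at most k red
  features, so GREEDY has margin at least the sum of the g(i) - 1. Let j be the first step with
  g(j) at most 1. From then on every red feature covers at most one uncovered blue feature, and
  since each exemplar contains a red feature, any subcollection pays for each of its blue
  features not covered in the first j steps with one red feature. Hence every margin is at most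
  g(0) + ... + g(j-1), which is at most twice the sum of the g(i) - 1 for i < j because
  g(i) is at least 2 there.\<close>

definition greedy_gain :: "'a set \<Rightarrow> 'a set \<Rightarrow> 'a set set \<Rightarrow> 'a list \<Rightarrow> nat \<Rightarrow> nat" where
  "greedy_gain U T S rs i = gain U T S (covered S (take i rs)) (rs ! i)"

lemma covered_append: "covered S (xs @ ys) = covered S xs \<union> covered S ys"
  by (auto simp: covered_def)

lemma covered_single: "covered S [r] = {b. covers S r b}"
  by (simp add: covered_def)

lemma greedy_gain_append:
  "i < length rs \<Longrightarrow> greedy_gain U T S (rs @ ys) i = greedy_gain U T S rs i"
  by (simp add: greedy_gain_def nth_append)

lemma card_blue_covered_Un:
  assumes "finite (blue U T)"
  shows "card (blue U T \<inter> (C \<union> {b. covers S r b})) = card (blue U T \<inter> C) + gain U T S C r"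
proof -
  have split: "blue U T \<inter> (C \<union> {b. covers S r b})
      = (blue U T \<inter> C) \<union> {b \<in> blue U T. b \<notin> C \<and> covers S r b}"
    by auto
  show ?thesis
    unfolding split gain_def by (rule card_Un_disjoint) (use assms in auto)
qed

lemma card_blue_covered:
  assumes "finite (blue U T)"
  shows "card (blue U T \<inter> covered S rs) = (\<Sum>i<length rs. greedy_gain U T S rs i)"
proof (induction rs rule: rev_induct)
  case Nil
  then show ?case by (simp add: covered_def)
next
  case (snoc r rs)
  have "card (blue U T \<inter> covered S (rs @ [r]))
      = card (blue U T \<inter> covered S rs) + gain U T S (covered S rs) r"
    by (simp add: covered_append covered_single card_blue_covered_Un assms)
  also have "\<dots> = (\<Sum>i<length rs. greedy_gain U T S (rs @ [r]) i)
                  + greedy_gain U T S (rs @ [r]) (length rs)"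
    using greedy_gain_append[of _ rs U T S "[r]"] by (simp add: snoc.IH greedy_gain_def)
  finally show ?case by simp
qed

lemma tap_instance_red_in_exemplar:
  assumes "tap_instance U T S" "E \<in> S"
  obtains r where "r \<in> red U T" "r \<in> E"
proof -
  from assms have "E - T \<noteq> {}" "E \<subseteq> U"
    by (auto simp: tap_instance_def)
  then show thesis
    using that unfolding red_def by blast
qed

lemma tap_instance_finite_blue: "tap_instance U T S \<Longrightarrow> finite (blue U T)"
  by (simp add: tap_instance_def blue_def)

lemma gain_pos_if_uncovered:
  assumes tap: "tap_instance U T S" and b: "b \<in> blue U T" "b \<notin> C"
  obtains r where "r \<in> red U T" "0 < gain U T S C r"
proof -
  have "b \<in> \<Union>S"
    using tap b by (simp add: tap_instance_def blue_def)
  then obtain E where E: "E \<in> S" "b \<in> E" by blast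
  obtain r where r: "r \<in> red U T" "r \<in> E"
    using tap_instance_red_in_exemplar[OF tap E(1)] .
  have "b \<in> {b \<in> blue U T. b \<notin> C \<and> covers S r b}"
    using b E r unfolding covers_def by auto
  then have "0 < gain U T S C r"
    unfolding gain_def using tap_instance_finite_blue[OF tap] card_gt_0_iff by fastforce
  with r show thesis using that by blast
qed

lemma greedy_gain_ge_1:
  assumes "tap_instance U T S" "greedy_run U T S rs" "i < length rs"
  shows "1 \<le> greedy_gain U T S rs i"
proof -
  from assms(2,3) obtain b where b: "b \<in> blue U T" "b \<notin> covered S (take i rs)"
    and greedy: "\<forall>r \<in> red U T. gain U T S (covered S (take i rs)) r \<le> greedy_gain U T S rs i"
    unfolding greedy_run_def greedy_gain_def by blast
  obtain r where "r \<in> red U T" "0 < gain U T S (covered S (take i rs)) r"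
    using gain_pos_if_uncovered[OF assms(1) b] .
  with greedy show ?thesis by fastforce
qed

lemma covered_subset_Union_greedy_output: "covered S rs \<subseteq> \<Union>(greedy_output S rs)"
proof
  fix b assume "b \<in> covered S rs"
  then obtain r E where "r \<in> set rs" "E \<in> S" "r \<in> E" "b \<in> E"
    unfolding covered_def covers_def by blast
  then show "b \<in> \<Union>(greedy_output S rs)"
    unfolding greedy_output_def by blast
qed

lemma red_Union_greedy_output_subset:
  assumes "one_red U T S" "set rs \<subseteq> red U T"
  shows "red U T \<inter> \<Union>(greedy_output S rs) \<subseteq> set rs"
proof
  fix x assume x: "x \<in> red U T \<inter> \<Union>(greedy_output S rs)"
  then obtain E r where E: "E \<in> S" "x \<in> E" "r \<in> set rs" "r \<in> E"
    unfolding greedy_output_def by auto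
  have "card (red U T \<inter> E) = 1"
    using assms(1) E(1) unfolding one_red_def by blast
  then obtain y where "red U T \<inter> E = {y}"
    by (rule card_1_singletonE)
  moreover have "x \<in> red U T \<inter> E" "r \<in> red U T \<inter> E"
    using x E assms(2) by auto
  ultimately have "x = r"
    by simp
  with E(3) show "x \<in> set rs" by simp
qed

lemma margin_greedy_output_ge:
  assumes "one_red U T S" and run: "greedy_run U T S rs"
  shows "int (card (blue U T)) - int (length rs) \<le> margin U T (greedy_output S rs)"
proof -
  have "\<forall>i<length rs. rs ! i \<in> red U T" and "blue U T \<subseteq> covered S rs"
    using run by (simp_all add: greedy_run_def)
  then have "set rs \<subseteq> red U T"
    by (auto simp: in_set_conv_nth)
  then have "card (red U T \<inter> \<Union>(greedy_output S rs)) \<le> card (set rs)"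
    using red_Union_greedy_output_subset[OF assms(1)] by (intro card_mono) auto
  then have "card (red U T \<inter> \<Union>(greedy_output S rs)) \<le> length rs"
    using card_length[of rs] by linarith
  moreover have "blue U T \<inter> \<Union>(greedy_output S rs) = blue U T"
    using \<open>blue U T \<subseteq> covered S rs\<close> covered_subset_Union_greedy_output
    by (meson Int_absorb2 order_trans)
  ultimately show ?thesis
    unfolding margin_def by simp
qed

lemma margin_le_card_blue_covered:
  assumes tap: "tap_instance U T S" and "S' \<subseteq> S"
    and small_gains: "\<forall>r \<in> red U T. gain U T S C r \<le> 1"
  shows "margin U T S' \<le> int (card (blue U T \<inter> C))"
proof -
  define R where "R = red U T \<inter> \<Union>S'"
  have finB: "finite (blue U T)" using tap_instance_finite_blue[OF tap] .
  have finR: "finite R"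
    using tap unfolding R_def red_def tap_instance_def by simp
  have "blue U T \<inter> \<Union>S' - C \<subseteq> (\<Union>r\<in>R. {b \<in> blue U T. b \<notin> C \<and> covers S r b})"
  proof
    fix b assume b: "b \<in> blue U T \<inter> \<Union>S' - C"
    then obtain E where E: "E \<in> S'" "b \<in> E" by auto
    with \<open>S' \<subseteq> S\<close> obtain r where r: "r \<in> red U T" "r \<in> E"
      using tap_instance_red_in_exemplar[OF tap] by blast
    have "r \<in> R"
      using r E unfolding R_def by blast
    moreover have "covers S r b"
      using r E \<open>S' \<subseteq> S\<close> unfolding covers_def by blast
    ultimately show "b \<in> (\<Union>r\<in>R. {b \<in> blue U T. b \<notin> C \<and> covers S r b})"
      using b by (intro UN_I) auto
  qed
  then have "card (blue U T \<inter> \<Union>S' - C)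
      \<le> card (\<Union>r\<in>R. {b \<in> blue U T. b \<notin> C \<and> covers S r b})"
    using finB finR by (intro card_mono) auto
  also have "\<dots> \<le> (\<Sum>r\<in>R. gain U T S C r)"
    unfolding gain_def by (rule card_UN_le[OF finR])
  also have "\<dots> \<le> card R"
    using sum_mono[of R "gain U T S C" "\<lambda>_. 1"] small_gains unfolding R_def by auto
  finally have outside: "card (blue U T \<inter> \<Union>S' - C) \<le> card R" .
  have "card (blue U T \<inter> \<Union>S') \<le> card (blue U T \<inter> \<Union>S' \<inter> C) + card (blue U T \<inter> \<Union>S' - C)"
    by (metis Int_Diff_Un card_Un_le)
  also have "card (blue U T \<inter> \<Union>S' \<inter> C) \<le> card (blue U T \<inter> C)"
    using finB by (intro card_mono) auto
  finally show ?thesis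
    using outside unfolding margin_def R_def by linarith
qed

lemma greedy_threshold:
  assumes run: "greedy_run U T S rs"
  obtains j where "j \<le> length rs" "\<forall>i<j. 2 \<le> greedy_gain U T S rs i"
    "\<forall>r \<in> red U T. gain U T S (covered S (take j rs)) r \<le> 1"
proof -
  define P where "P i \<longleftrightarrow> length rs \<le> i \<or> greedy_gain U T S rs i \<le> 1" for i
  define j where "j = (LEAST i. P i)"
  have "P j"
    unfolding j_def by (rule LeastI[of P "length rs"]) (simp add: P_def)
  have "j \<le> length rs"
    unfolding j_def by (rule Least_le) (simp add: P_def)
  moreover have "\<forall>i<j. 2 \<le> greedy_gain U T S rs i"
  proof (intro allI impI)
    fix i assume "i < j"
    then have "\<not> P i"
      unfolding j_def by (rule not_less_Least)
    then show "2 \<le> greedy_gain U T S rs i"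
      unfolding P_def by simp
  qed
  moreover have "\<forall>r \<in> red U T. gain U T S (covered S (take j rs)) r \<le> 1"
  proof (cases "j < length rs")
    case True
    with \<open>P j\<close> run show ?thesis
      unfolding P_def greedy_run_def greedy_gain_def by (meson le_trans not_le)
  next
    case False
    with \<open>j \<le> length rs\<close> have "blue U T \<subseteq> covered S (take j rs)"
      using run unfolding greedy_run_def by simp
    then have no_gain: "{b \<in> blue U T. b \<notin> covered S (take j rs) \<and> covers S r b} = {}" for r
      by blast
    show ?thesis
      unfolding gain_def no_gain by simp
  qed
  ultimately show thesis
    by (rule that)
qed

lemma margin_le_twice_greedy_margin:
  assumes tap: "tap_instance U T S" and one_red: "one_red U T S"
    and run: "greedy_run U T S rs" and "S' \<subseteq> S"
  shows "margin U T S' \<le> 2 * margin U T (greedy_output S rs)"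
proof -
  let ?g = "greedy_gain U T S rs" and ?k = "length rs"
  obtain j where "j \<le> ?k" and big: "\<forall>i<j. 2 \<le> ?g i"
    and small: "\<forall>r \<in> red U T. gain U T S (covered S (take j rs)) r \<le> 1"
    using greedy_threshold[OF run] .
  have finB: "finite (blue U T)"
    using tap_instance_finite_blue[OF tap] .
  have "card (blue U T \<inter> covered S (take j rs)) = (\<Sum>i<j. ?g i)"
    using card_blue_covered[OF finB, of S "take j rs"] \<open>j \<le> ?k\<close>
    by (simp add: greedy_gain_def min_absorb2)
  then have "margin U T S' \<le> (\<Sum>i<j. int (?g i))"
    using margin_le_card_blue_covered[OF tap \<open>S' \<subseteq> S\<close> small] by simp
  also have "\<dots> \<le> (\<Sum>i<j. 2 * (int (?g i) - 1))"
    using big by (intro sum_mono) fastforce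
  also have "\<dots> \<le> (\<Sum>i<?k. 2 * (int (?g i) - 1))"
    using \<open>j \<le> ?k\<close> greedy_gain_ge_1[OF tap run] by (intro sum_mono2) fastforce+
  also have "\<dots> = 2 * (int (\<Sum>i<?k. ?g i) - int ?k)"
    by (simp add: sum_distrib_left sum_subtractf)
  also have "(\<Sum>i<?k. ?g i) = card (blue U T)"
    using card_blue_covered[OF finB, of S rs] run
    unfolding greedy_run_def by (simp add: Int_absorb2)
  also have "2 * (int (card (blue U T)) - int ?k) \<le> 2 * margin U T (greedy_output S rs)"
    using margin_greedy_output_ge[OF one_red run] by simp
  finally show ?thesis .
qed

lemma max_margin_attained:
  assumes "tap_instance U T S"
  obtains S' where "S' \<subseteq> S" "max_margin U T S = margin U T S'"
proof -
  have "finite S"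
    using assms unfolding tap_instance_def by (metis finite_UnionD)
  then have "max_margin U T S \<in> margin U T ` Pow S"
    unfolding max_margin_def by (intro Max_in) auto
  then show thesis using that by blast
qed

lemma two_weight_imp_one_red:
  assumes tap: "tap_instance U T S" and "two_weight S"
  shows "one_red U T S"
  unfolding one_red_def
proof
  fix E assume E: "E \<in> S"
  have "finite E" "E \<subseteq> U" "E \<inter> T \<noteq> {}" "E - T \<noteq> {}"
    using tap E unfolding tap_instance_def by (auto intro: finite_subset)
  then have "1 \<le> card (E \<inter> T)" "1 \<le> card (E - T)"
    by (simp_all add: Suc_le_eq card_gt_0_iff)
  moreover have "card (E \<inter> T) + card (E - T) = card E"
    using \<open>finite E\<close> by (metis Int_Diff_Un Int_Diff_disjoint card_Un_disjoint finite_Diff finite_Int)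
  moreover have "card E \<le> 2"
    using \<open>two_weight S\<close> E unfolding two_weight_def by blast
  ultimately have "card (E - T) = 1"
    by linarith
  moreover have "red U T \<inter> E = E - T"
    using \<open>E \<subseteq> U\<close> unfolding red_def by auto
  ultimately show "card (red U T \<inter> E) = 1" by simp
qed

theorem theorem13:
  fixes U T :: "'a set" and S :: "'a set set"
  assumes "tap_instance U T S"
  shows "(one_red U T S \<longrightarrow>
            (\<forall>rs. greedy_run U T S rs \<longrightarrow>
               real_of_int (margin U T (greedy_output S rs))
                 \<ge> 1/2 * real_of_int (max_margin U T S)))
       \<and> (two_weight S \<longrightarrow>
            (\<forall>rs. greedy_run U T S rs \<longrightarrow>
               real_of_int (margin U T (greedy_output S rs))
                 \<ge> 1/2 * real_of_int (max_margin U T S)))"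
proof -
  obtain S' where "S' \<subseteq> S" and opt: "max_margin U T S = margin U T S'"
    using max_margin_attained[OF assms] .
  have "real_of_int (margin U T (greedy_output S rs)) \<ge> 1/2 * real_of_int (max_margin U T S)"
    if "one_red U T S" "greedy_run U T S rs" for rs
    using margin_le_twice_greedy_margin[OF assms that \<open>S' \<subseteq> S\<close>] unfolding opt by linarith
  then show ?thesis
    using two_weight_imp_one_red[OF assms] by blast
qed

end
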